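(* Let $R$ be a nonabelian group whose order is a product of two distinct primes, and let $S\subseteq R$. If $\mathrm{Cay}(R,S)$ is a nontrivial generalised wreath product, then $\mathrm{Aut}(R)_S>1$.
   Context: $\mathrm{Aut}(R)_S$ is the group of automorphisms of $R$ fixing $S$ setwise. $\mathrm{Cay}(R,S)$ (vertex set $R$, arcs $r\to sr$ for $s\in S$) is a nontrivial generalised wreath product if there exist subgroups $K,H$ with $1<K\trianglelefteq H<R$ and $K(S\setminus H)=S\setminus H=(S\setminus H)K$. *)

theory Defs
  imports "HOL-Algebra.Algebra"
begin

text \<open>Automorphisms are elements of iso R R;
  they are compared on the carrier only (values outside carrier are irrelevant).
  The group Aut(R)_S is nontrivial iff it contains an automorphism that is not the
  identity on carrier R.\<close>
definition Aut_stab_nontrivial :: "('a, 'b) monoid_scheme \<Rightarrow> 'a set \<Rightarrow> bool" where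
  "Aut_stab_nontrivial R S \<longleftrightarrow>
     (\<exists>\<phi> \<in> iso R R. \<phi> ` S = S \<and> (\<exists>x \<in> carrier R. \<phi> x \<noteq> x))"

definition nontrivial_gen_wreath :: "('a, 'b) monoid_scheme \<Rightarrow> 'a set \<Rightarrow> bool" where
  "nontrivial_gen_wreath R S \<longleftrightarrow>
     (\<exists>K H. subgroup H R \<and> H \<noteq> carrier R \<and> K \<subseteq> H \<and>
        K \<lhd> (R\<lparr>carrier := H\<rparr>) \<and> K \<noteq> {\<one>\<^bsub>R\<^esub>} \<and>
        K <#>\<^bsub>R\<^esub> (S - H) = S - H \<and> (S - H) <#>\<^bsub>R\<^esub> K = S - H)"

end

theory Submission
  imports Defs
begin

text \<open>By Lagrange, in a group of order p q a subgroup properly containing a nontrivial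
  subgroup is the whole group. Applied to centralizers, this makes every proper subgroup, in
  particular H, abelian, and it makes the centre of the nonabelian group R trivial.
  Take k \<noteq> 1 in K. Conjugation by k fixes S \<inter> H pointwise, since H is abelian, and
  maps S - H into K (S - H) K = S - H. So it is an automorphism of R fixing S setwise,
  and it is not the identity because k is not central.\<close>

lemma dvd_prime_mult_prime_cases:
  fixes p q d :: nat
  assumes "Factorial_Ring.prime p" "Factorial_Ring.prime q" "d dvd p * q"
  shows "d = 1 \<or> d = p \<or> d = q \<or> d = p * q"
proof -
  obtain a b where "d = a * b" "a dvd p" "b dvd q"
    using division_decomp[OF assms(3)] by blast
  moreover have "a = 1 \<or> a = p" "b = 1 \<or> b = q"
    using \<open>a dvd p\<close> \<open>b dvd q\<close> assms(1,2) prime_nat_iff by blast+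
  ultimately show ?thesis
    by auto
qed

lemma (in group) card_subgroup_dvd:
  assumes "subgroup I G" "subgroup J G" "I \<subseteq> J"
  shows "card I dvd card J"
proof -
  interpret J: group "G\<lparr>carrier := J\<rparr>"
    using subgroup_imp_group[OF assms(2)] .
  have "card (rcosets\<^bsub>G\<lparr>carrier := J\<rparr>\<^esub> I) * card I = card J"
    using J.lagrange[OF subgroup_incl[OF assms]] by (simp add: order_def)
  then show ?thesis
    by (metis dvd_triv_right)
qed

lemma (in group) subgroup_eq_carrier_if_psubset_nontrivial_order_pq:
  fixes p q :: nat
  assumes "Factorial_Ring.prime p" "Factorial_Ring.prime q" "order G = p * q"
    and "subgroup I G" "subgroup J G" "I \<subset> J" "I \<noteq> {\<one>}"
  shows "J = carrier G"
proof -
  have fin: "finite (carrier G)"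
    using assms(1-3) unfolding order_def by (metis card.infinite mult_is_0 not_prime_0)
  have J_carrier: "J \<subseteq> carrier G"
    using subgroup.subset[OF assms(5)] .
  then have fin_J: "finite J"
    using fin finite_subset by blast
  have J_dvd: "card J dvd p * q"
    using card_subgroup_dvd[OF assms(5) subgroup_self J_carrier] assms(3)
    unfolding order_def by simp
  moreover have "card I dvd card J"
    using card_subgroup_dvd[OF assms(4,5)] assms(6) by blast
  moreover have "card I < card J"
    using psubset_card_mono[OF fin_J assms(6)] .
  moreover have "card I \<noteq> 1"
  proof
    assume "card I = 1"
    then obtain x where "I = {x}"
      by (rule card_1_singletonE)
    then show False
      using subgroup.one_closed[OF assms(4)] assms(7) by blast
  qed
  ultimately have "card J \<noteq> 1" "\<not> Factorial_Ring.prime (card J)"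
    by (auto, metis nat_neq_iff prime_nat_iff)
  with J_dvd have "card J = p * q"
    using dvd_prime_mult_prime_cases[OF assms(1,2)] assms(1,2) by auto
  then show ?thesis
    using card_subset_eq[OF fin J_carrier] assms(3) unfolding order_def by simp
qed

definition centralizer :: "('a, 'b) monoid_scheme \<Rightarrow> 'a set \<Rightarrow> 'a set" where
  "centralizer G A = {g \<in> carrier G. \<forall>a \<in> A. g \<otimes>\<^bsub>G\<^esub> a = a \<otimes>\<^bsub>G\<^esub> g}"

lemma (in group) centralizer_subgroup:
  assumes "A \<subseteq> carrier G"
  shows "subgroup (centralizer G A) G"
proof (rule subgroupI)
  show "centralizer G A \<subseteq> carrier G" "centralizer G A \<noteq> {}"
    using assms unfolding centralizer_def by (auto intro!: exI[of _ \<one>])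
next
  fix g assume "g \<in> centralizer G A"
  then have g: "g \<in> carrier G" and comm: "\<And>a. a \<in> A \<Longrightarrow> g \<otimes> a = a \<otimes> g"
    unfolding centralizer_def by auto
  have "inv g \<otimes> a = a \<otimes> inv g" if a: "a \<in> A" for a
  proof -
    have a_carrier: "a \<in> carrier G"
      using a assms by blast
    have "inv g \<otimes> a = inv g \<otimes> (a \<otimes> g) \<otimes> inv g"
      using g a_carrier by (simp add: m_assoc)
    also have "\<dots> = inv g \<otimes> (g \<otimes> a) \<otimes> inv g"
      using comm[OF a] by simp
    also have "\<dots> = a \<otimes> inv g"
      using g a_carrier by (simp add: m_assoc[symmetric])
    finally show ?thesis .
  qed
  then show "inv g \<in> centralizer G A"
    using g unfolding centralizer_def by auto
next
  fix g h assume "g \<in> centralizer G A" "h \<in> centralizer G A"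
  then show "g \<otimes> h \<in> centralizer G A"
    using assms unfolding centralizer_def by (auto simp: m_assoc) (metis m_assoc subsetD)
qed

lemma (in group) comm_group_if_centre_nontrivial_order_pq:
  fixes p q :: nat
  assumes "Factorial_Ring.prime p" "Factorial_Ring.prime q" "order G = p * q"
    and "z \<in> centralizer G (carrier G)" "z \<noteq> \<one>"
  shows "comm_group G"
proof -
  let ?Z = "centralizer G (carrier G)"
  have central: "x \<in> ?Z" if x: "x \<in> carrier G" for x
  proof (rule ccontr)
    assume "x \<notin> ?Z"
    moreover have "x \<in> centralizer G {x}" "?Z \<subseteq> centralizer G {x}"
      using x unfolding centralizer_def by auto
    ultimately have "?Z \<subset> centralizer G {x}"
      by blast
    moreover have "?Z \<noteq> {\<one>}"
      using assms(4,5) by blast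
    ultimately have "centralizer G {x} = carrier G"
      using subgroup_eq_carrier_if_psubset_nontrivial_order_pq[OF assms(1-3)] centralizer_subgroup x by blast
    then have "x \<otimes> a = a \<otimes> x" if "a \<in> carrier G" for a
    proof -
      have "a \<in> centralizer G {x}"
        using that \<open>centralizer G {x} = carrier G\<close> by simp
      then show ?thesis
        unfolding centralizer_def by simp
    qed
    then show False
      using \<open>x \<notin> ?Z\<close> x unfolding centralizer_def by blast
  qed
  then show ?thesis
  proof (intro group_comm_groupI)
    fix x y assume "x \<in> carrier G" "y \<in> carrier G"
    then show "x \<otimes> y = y \<otimes> x"
      using central[of x] unfolding centralizer_def by blast
  qed
qed

lemma (in group) proper_subgroup_commutative_order_pq:
  fixes p q :: nat
  assumes "Factorial_Ring.prime p" "Factorial_Ring.prime q" "order G = p * q"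
    and "subgroup H G" "H \<noteq> carrier G"
  shows "H \<subseteq> centralizer G H"
proof -
  have "H \<subseteq> centralizer G {g}" if g: "g \<in> H" for g
  proof (rule ccontr)
    assume "\<not> H \<subseteq> centralizer G {g}"
    then have "centralizer G {g} \<inter> H \<subset> H"
      by blast
    moreover have "g \<in> centralizer G {g} \<inter> H"
      using g subgroup.subset[OF assms(4)] unfolding centralizer_def by auto
    moreover have "g \<noteq> \<one>"
      using \<open>\<not> H \<subseteq> centralizer G {g}\<close> subgroup.subset[OF assms(4)]
      unfolding centralizer_def by auto
    moreover have "subgroup (centralizer G {g} \<inter> H) G"
      using g subgroup.subset[OF assms(4)]
      by (intro subgroups_Inter_pair centralizer_subgroup assms(4)) auto
    ultimately show False
      using subgroup_eq_carrier_if_psubset_nontrivial_order_pq[OF assms(1-3) _ assms(4)] assms(5) by blast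
  qed
  then show ?thesis
    using subgroup.subset[OF assms(4)] unfolding centralizer_def by blast
qed

lemma (in group) conjugation_iso:
  assumes "g \<in> carrier G"
  shows "(\<lambda>x. g \<otimes> x \<otimes> inv g) \<in> iso G G"
proof -
  have "g \<otimes> (x \<otimes> y) \<otimes> inv g = g \<otimes> x \<otimes> inv g \<otimes> (g \<otimes> y \<otimes> inv g)"
    if "x \<in> carrier G" "y \<in> carrier G" for x y
  proof -
    have "g \<otimes> x \<otimes> inv g \<otimes> (g \<otimes> y \<otimes> inv g) = g \<otimes> x \<otimes> (inv g \<otimes> g) \<otimes> y \<otimes> inv g"
      using that assms by (simp only: m_assoc m_closed inv_closed)
    also have "\<dots> = g \<otimes> (x \<otimes> y) \<otimes> inv g"
      using that assms by (simp add: m_assoc)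
    finally show ?thesis by simp
  qed
  then have "(\<lambda>x. g \<otimes> x \<otimes> inv g) \<in> hom G G"
    using assms unfolding hom_def by auto
  moreover have "bij_betw (\<lambda>x. g \<otimes> x \<otimes> inv g) (carrier G) (carrier G)"
    using conjugation_is_bij[OF assms] by (rule bij_betw_cong[THEN iffD1, rotated]) auto
  ultimately show ?thesis
    unfolding iso_def by blast
qed

lemma (in group) conjugation_image_subset_wreath_set:
  assumes "subgroup K G" "K \<subseteq> centralizer G (S \<inter> H)"
    and "K <#> (S - H) = S - H" "(S - H) <#> K = S - H"
    and "k \<in> K" "S \<subseteq> carrier G"
  shows "(\<lambda>x. k \<otimes> x \<otimes> inv k) ` S \<subseteq> S"
proof
  fix y assume "y \<in> (\<lambda>x. k \<otimes> x \<otimes> inv k) ` S"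
  then obtain s where s: "s \<in> S" and y: "y = k \<otimes> s \<otimes> inv k"
    by blast
  have k: "k \<in> carrier G" "inv k \<in> K"
    using subgroup.subset[OF assms(1)] subgroup.m_inv_closed[OF assms(1)] assms(5) by auto
  show "y \<in> S"
  proof (cases "s \<in> H")
    case True
    then have "k \<otimes> s = s \<otimes> k"
      using assms(2,5) s unfolding centralizer_def by blast
    then have "y = s \<otimes> k \<otimes> inv k"
      using y by simp
    also have "\<dots> = s"
      using k(1) s assms(6) by (simp add: m_assoc subsetD)
    finally show ?thesis
      using s by simp
  next
    case False
    then have "k \<otimes> s \<in> S - H"
      using assms(3,5) s unfolding set_mult_def by blast
    then show ?thesis
      using assms(4) k(2) y unfolding set_mult_def by blast
  qed
qed

lemma (in group) conjugation_image_eq_wreath_set: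
  assumes "subgroup K G" "K \<subseteq> centralizer G (S \<inter> H)"
    and "K <#> (S - H) = S - H" "(S - H) <#> K = S - H"
    and "k \<in> K" "S \<subseteq> carrier G"
  shows "(\<lambda>x. k \<otimes> x \<otimes> inv k) ` S = S"
proof
  show "(\<lambda>x. k \<otimes> x \<otimes> inv k) ` S \<subseteq> S"
    using conjugation_image_subset_wreath_set[OF assms] .
next
  have k: "k \<in> carrier G" "inv k \<in> K"
    using subgroup.subset[OF assms(1)] subgroup.m_inv_closed[OF assms(1)] assms(5) by auto
  show "S \<subseteq> (\<lambda>x. k \<otimes> x \<otimes> inv k) ` S"
  proof
    fix s assume s: "s \<in> S"
    have "inv k \<otimes> s \<otimes> k \<in> S"
      using conjugation_image_subset_wreath_set[OF assms(1-4) k(2) assms(6)] s k(1) by auto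
    moreover have "s = k \<otimes> (inv k \<otimes> s \<otimes> k) \<otimes> inv k"
      using conjugation_is_surj k(1) s assms(6) by auto
    ultimately show "s \<in> (\<lambda>x. k \<otimes> x \<otimes> inv k) ` S"
      by blast
  qed
qed

lemma (in group) Aut_stab_nontrivial_if_noncentral_conjugation:
  assumes "k \<in> carrier G" "k \<notin> centralizer G (carrier G)"
    and "(\<lambda>x. k \<otimes> x \<otimes> inv k) ` S = S"
  shows "Aut_stab_nontrivial G S"
proof -
  obtain x where x: "x \<in> carrier G" "k \<otimes> x \<noteq> x \<otimes> k"
    using assms(1,2) unfolding centralizer_def by auto
  then have "k \<otimes> x \<otimes> inv k \<noteq> x"
    using assms(1) by (metis inv_solve_right m_closed)
  then show ?thesis
    unfolding Aut_stab_nontrivial_def using conjugation_iso[OF assms(1)] assms(3) x(1) by blast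
qed

theorem corollary4p8:
  fixes R :: "('a, 'b) monoid_scheme" and S :: "'a set" and p q :: nat
  assumes "group R"
    and "\<not> comm_group R"
    and "finite (carrier R)"
    and "Factorial_Ring.prime p" and "Factorial_Ring.prime q" and "p \<noteq> q"
    and "order R = p * q"
    and "S \<subseteq> carrier R"
    and "nontrivial_gen_wreath R S"
  shows "Aut_stab_nontrivial R S"
proof -
  interpret group R by fact
  obtain K H where H: "subgroup H R" "H \<noteq> carrier R" "K \<subseteq> H"
    and K: "K \<lhd> R\<lparr>carrier := H\<rparr>" "K \<noteq> {\<one>\<^bsub>R\<^esub>}"
    and wreath: "K <#>\<^bsub>R\<^esub> (S - H) = S - H" "(S - H) <#>\<^bsub>R\<^esub> K = S - H"
    using assms(9) unfolding nontrivial_gen_wreath_def by blast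
  have K_subgroup: "subgroup K R"
    using incl_subgroup[OF H(1) normal_imp_subgroup[OF K(1)]] .
  obtain k where k: "k \<in> K" "k \<noteq> \<one>\<^bsub>R\<^esub>"
    using K(2) subgroup.one_closed[OF K_subgroup] by blast
  have "K \<subseteq> centralizer R (S \<inter> H)"
    using proper_subgroup_commutative_order_pq[OF assms(4,5,7) H(1,2)] H(3)
    unfolding centralizer_def by blast
  moreover have "k \<notin> centralizer R (carrier R)"
    using comm_group_if_centre_nontrivial_order_pq[OF assms(4,5,7)] assms(2) k(2)
    by blast
  ultimately show ?thesis
    using Aut_stab_nontrivial_if_noncentral_conjugation
      conjugation_image_eq_wreath_set[OF K_subgroup _ wreath k(1) assms(8)]
      subgroup.subset[OF K_subgroup] k(1) by blast
qed

end
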